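(* For any metrized graph $\Gamma$ with $v$ vertices and any vertex $p\in V(\Gamma)$, $$4Kf(\Gamma)=v \cdot \sum_{e_i \in E(\Gamma)}\frac{L_i(R_{a_i,p}-R_{b_i,p})^2}{(L_i+R_i)^2} + \sum_{e_i \in E(\Gamma)}\frac{R_i}{L_i + R_i} \sum_{w \in V(\Gamma)}\big(r(p_i,w)+r(q_i,w)\big),$$ where $p_i,q_i$ denote the end points of $e_i$.
   Context: A metrized graph $\Gamma$ is a finite connected graph (multiple edges and self-loops allowed) each of whose edges is identified with a closed segment of positive length, with a finite nonempty vertex set $V(\Gamma)$ containing every point of valence $\neq2$; $v=\#V(\Gamma)$, $L_i$ the length of $e_i$, $r$ the effective resistance (edges as resistors of resistance equal to length). $Kf(\Gamma)=\frac12\sum_{p,q\in V(\Gamma)}r(p,q)$. For an edge $e_i$: if $\Gamma-e_i$ (interior deleted) is connected, $R_i$ is the effective resistance between $p_i,q_i$ in $\Gamma-e_i$, $R_{a_i,p}=\hat j_{p_i}(p,q_i)$, $R_{b_i,p}=\hat j_{q_i}(p,p_i)$ with $\hat j_z(x,y)$ the voltage function of $\Gamma-e_i$ (potential at $x$ when unit current enters at $y$ and exits at $z$, potential $0$ at $z$); if $e_i$ is a bridge, $R_{a_i,p}=0,R_{b_i,p}=R_i$ for $p$ in the component of $\Gamma-e_i$ containing $p_i$ and $R_{a_i,p}=R_i,R_{b_i,p}=0$ otherwise, with every expression in $R_i$ interpreted as its limit as $R_i\to\infty$; for a self-loop $R_i=0$. *)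

theory Defs
  imports Complex_Main
begin

text \<open>A metrized graph is modelled by its combinatorial data: a finite nonempty vertex
  set V, a finite set E of edge labels, endpoint maps src/tgt (so edge e joins src e and
  tgt e; multiple edges and self-loops allowed) and positive lengths L.  Effective
  resistances between vertices are those of the resistor network with resistance L e on e.\<close>

definition adj_rel :: "'e set \<Rightarrow> ('e \<Rightarrow> 'v) \<Rightarrow> ('e \<Rightarrow> 'v) \<Rightarrow> ('v \<times> 'v) set" where
  "adj_rel F src tgt = {(src e, tgt e) | e. e \<in> F} \<union> {(tgt e, src e) | e. e \<in> F}"

definition graph_connected ::
  "'v set \<Rightarrow> 'e set \<Rightarrow> ('e \<Rightarrow> 'v) \<Rightarrow> ('e \<Rightarrow> 'v) \<Rightarrow> bool" where
  "graph_connected V F src tgt \<longleftrightarrow> (\<forall>x\<in>V. \<forall>y\<in>V. (x, y) \<in> (adj_rel F src tgt)\<^sup>*)"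

definition metrized_graph ::
  "'v set \<Rightarrow> 'e set \<Rightarrow> ('e \<Rightarrow> 'v) \<Rightarrow> ('e \<Rightarrow> 'v) \<Rightarrow> ('e \<Rightarrow> real) \<Rightarrow> bool" where
  "metrized_graph V E src tgt L \<longleftrightarrow>
     finite V \<and> V \<noteq> {} \<and> finite E \<and>
     (\<forall>e\<in>E. src e \<in> V \<and> tgt e \<in> V \<and> L e > 0) \<and>
     graph_connected V E src tgt"

text \<open>\<open>is_potential V F src tgt L y z u\<close>: u is the potential (on the network with edge set F)
  when unit current enters at y and exits at z, grounded at z (u z = 0); u vanishes off V.\<close>

definition is_potential ::
  "'v set \<Rightarrow> 'e set \<Rightarrow> ('e \<Rightarrow> 'v) \<Rightarrow> ('e \<Rightarrow> 'v) \<Rightarrow> ('e \<Rightarrow> real) \<Rightarrow> 'v \<Rightarrow> 'v \<Rightarrow> ('v \<Rightarrow> real) \<Rightarrow> bool" where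
  "is_potential V F src tgt L y z u \<longleftrightarrow>
     u z = 0 \<and> (\<forall>w. w \<notin> V \<longrightarrow> u w = 0) \<and>
     (\<forall>w\<in>V. (\<Sum>e\<in>{e\<in>F. src e = w}. (u w - u (tgt e)) / L e)
            + (\<Sum>e\<in>{e\<in>F. tgt e = w}. (u w - u (src e)) / L e)
            = (if w = y then 1 else 0) - (if w = z then 1 else 0))"

definition jvolt ::
  "'v set \<Rightarrow> 'e set \<Rightarrow> ('e \<Rightarrow> 'v) \<Rightarrow> ('e \<Rightarrow> 'v) \<Rightarrow> ('e \<Rightarrow> real) \<Rightarrow> 'v \<Rightarrow> 'v \<Rightarrow> 'v \<Rightarrow> real" where
  "jvolt V F src tgt L z x y = (THE u. is_potential V F src tgt L y z u) x"

definition eff_res ::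
  "'v set \<Rightarrow> 'e set \<Rightarrow> ('e \<Rightarrow> 'v) \<Rightarrow> ('e \<Rightarrow> 'v) \<Rightarrow> ('e \<Rightarrow> real) \<Rightarrow> 'v \<Rightarrow> 'v \<Rightarrow> real" where
  "eff_res V F src tgt L x y = jvolt V F src tgt L y x x"

definition Kf ::
  "'v set \<Rightarrow> 'e set \<Rightarrow> ('e \<Rightarrow> 'v) \<Rightarrow> ('e \<Rightarrow> 'v) \<Rightarrow> ('e \<Rightarrow> real) \<Rightarrow> real" where
  "Kf V E src tgt L = (1/2) * (\<Sum>p\<in>V. \<Sum>q\<in>V. eff_res V E src tgt L p q)"

definition is_bridge ::
  "'v set \<Rightarrow> 'e set \<Rightarrow> ('e \<Rightarrow> 'v) \<Rightarrow> ('e \<Rightarrow> 'v) \<Rightarrow> 'e \<Rightarrow> bool" where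
  "is_bridge V E src tgt i \<longleftrightarrow> \<not> graph_connected V (E - {i}) src tgt"

definition R_edge ::
  "'v set \<Rightarrow> 'e set \<Rightarrow> ('e \<Rightarrow> 'v) \<Rightarrow> ('e \<Rightarrow> 'v) \<Rightarrow> ('e \<Rightarrow> real) \<Rightarrow> 'e \<Rightarrow> real" where
  "R_edge V E src tgt L i = eff_res V (E - {i}) src tgt L (src i) (tgt i)"

definition Ra ::
  "'v set \<Rightarrow> 'e set \<Rightarrow> ('e \<Rightarrow> 'v) \<Rightarrow> ('e \<Rightarrow> 'v) \<Rightarrow> ('e \<Rightarrow> real) \<Rightarrow> 'e \<Rightarrow> 'v \<Rightarrow> real" where
  "Ra V E src tgt L i p = jvolt V (E - {i}) src tgt L (src i) p (tgt i)"

definition Rb ::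
  "'v set \<Rightarrow> 'e set \<Rightarrow> ('e \<Rightarrow> 'v) \<Rightarrow> ('e \<Rightarrow> 'v) \<Rightarrow> ('e \<Rightarrow> real) \<Rightarrow> 'e \<Rightarrow> 'v \<Rightarrow> real" where
  "Rb V E src tgt L i p = jvolt V (E - {i}) src tgt L (tgt i) p (src i)"

text \<open>Bridge case: R_{a_i,p}, R_{b_i,p} as functions of the parameter R_i = t
  (to be sent to infinity).\<close>
definition in_comp_src ::
  "'e set \<Rightarrow> ('e \<Rightarrow> 'v) \<Rightarrow> ('e \<Rightarrow> 'v) \<Rightarrow> 'e \<Rightarrow> 'v \<Rightarrow> bool" where
  "in_comp_src E src tgt i p \<longleftrightarrow> (src i, p) \<in> (adj_rel (E - {i}) src tgt)\<^sup>*"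

definition Ra_br :: "'e set \<Rightarrow> ('e \<Rightarrow> 'v) \<Rightarrow> ('e \<Rightarrow> 'v) \<Rightarrow> 'e \<Rightarrow> 'v \<Rightarrow> real \<Rightarrow> real" where
  "Ra_br E src tgt i p t = (if in_comp_src E src tgt i p then 0 else t)"

definition Rb_br :: "'e set \<Rightarrow> ('e \<Rightarrow> 'v) \<Rightarrow> ('e \<Rightarrow> 'v) \<Rightarrow> 'e \<Rightarrow> 'v \<Rightarrow> real \<Rightarrow> real" where
  "Rb_br E src tgt i p t = (if in_comp_src E src tgt i p then t else 0)"

definition term1 ::
  "'v set \<Rightarrow> 'e set \<Rightarrow> ('e \<Rightarrow> 'v) \<Rightarrow> ('e \<Rightarrow> 'v) \<Rightarrow> ('e \<Rightarrow> real) \<Rightarrow> 'v \<Rightarrow> 'e \<Rightarrow> real" where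
  "term1 V E src tgt L p i =
     (if is_bridge V E src tgt i then
        Lim at_top (\<lambda>t::real. L i * (Ra_br E src tgt i p t - Rb_br E src tgt i p t)\<^sup>2 / (L i + t)\<^sup>2)
      else L i * (Ra V E src tgt L i p - Rb V E src tgt L i p)\<^sup>2 / (L i + R_edge V E src tgt L i)\<^sup>2)"

definition factor2 ::
  "'v set \<Rightarrow> 'e set \<Rightarrow> ('e \<Rightarrow> 'v) \<Rightarrow> ('e \<Rightarrow> 'v) \<Rightarrow> ('e \<Rightarrow> real) \<Rightarrow> 'e \<Rightarrow> real" where
  "factor2 V E src tgt L i =
     (if is_bridge V E src tgt i then Lim at_top (\<lambda>t::real. t / (L i + t))
      else R_edge V E src tgt L i / (L i + R_edge V E src tgt L i))"

end

theory Submission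
  imports Defs "HOL-Library.Function_Algebras" "HOL-Real_Asymp.Real_Asymp"
begin

text \<open>Let g_y be the normalized Green's function: Lap g_y = delta_y - 1/v and sum_w g_y(w) = 0.
  Green's identity sum_w f(w) Lap u(w) = sum_e df(e) du(e) / L_e makes g symmetric and gives
  r(x,y) = g_x(x) - 2 g_x(y) + g_y(y), hence Kf = v sum_x g_x(x).
  For an edge e_i let phi be the potential of a unit current from p_i to q_i in the whole graph.
  After deleting e_i it drives the current 1 - phi(p_i)/L_i: off a bridge, rescaling phi
  expresses R_i, R_{a_i,p} and R_{b_i,p} through phi; on a bridge the whole current crosses e_i
  and phi is constant on either side. Either way R_i/(L_i + R_i) = r(p_i,q_i)/L_i and the first
  summand is (phi(p_i) - 2 phi(p))^2/L_i. Written through g, the edge sums that appear are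
  instances of Green's identity and of Foster's theorem sum_i r(p_i,q_i)/L_i = v - 1.\<close>

section \<open>Resistor networks and the discrete Laplacian\<close>

definition laplacian ::
  "'e set \<Rightarrow> ('e \<Rightarrow> 'v) \<Rightarrow> ('e \<Rightarrow> 'v) \<Rightarrow> ('e \<Rightarrow> real) \<Rightarrow> ('v \<Rightarrow> real) \<Rightarrow> 'v \<Rightarrow> real" where
  "laplacian F src tgt L u w =
     (\<Sum>e\<in>{e\<in>F. src e = w}. (u w - u (tgt e)) / L e) + (\<Sum>e\<in>{e\<in>F. tgt e = w}. (u w - u (src e)) / L e)"

definition resistor_network ::
  "'v set \<Rightarrow> 'e set \<Rightarrow> ('e \<Rightarrow> 'v) \<Rightarrow> ('e \<Rightarrow> 'v) \<Rightarrow> ('e \<Rightarrow> real) \<Rightarrow> bool" where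
  "resistor_network V F src tgt L \<longleftrightarrow>
     finite V \<and> finite F \<and> (\<forall>e\<in>F. src e \<in> V \<and> tgt e \<in> V \<and> L e > 0)"

lemma is_potential_iff_laplacian:
  "is_potential V F src tgt L y z u \<longleftrightarrow> u z = 0 \<and> (\<forall>w. w \<notin> V \<longrightarrow> u w = 0) \<and>
     (\<forall>w\<in>V. laplacian F src tgt L u w = (if w = y then 1 else 0) - (if w = z then 1 else 0))"
  unfolding is_potential_def laplacian_def by simp

lemma metrized_graph_imp_resistor_network:
  "metrized_graph V E src tgt L \<Longrightarrow> resistor_network V E src tgt L"
  unfolding metrized_graph_def resistor_network_def by auto

lemma resistor_network_remove_edge:
  "resistor_network V F src tgt L \<Longrightarrow> resistor_network V (F - {i}) src tgt L"
  unfolding resistor_network_def by auto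

lemma laplacian_add:
  "laplacian F src tgt L (\<lambda>x. u x + v x) w = laplacian F src tgt L u w + laplacian F src tgt L v w"
  unfolding laplacian_def by (simp add: add_diff_add add_ac flip: sum.distrib add_divide_distrib)

lemma laplacian_diff:
  "laplacian F src tgt L (\<lambda>x. u x - v x) w = laplacian F src tgt L u w - laplacian F src tgt L v w"
  using laplacian_add[of F src tgt L "\<lambda>x. u x - v x" v w] by simp

lemma laplacian_cmult:
  "laplacian F src tgt L (\<lambda>x. c * u x) w = c * laplacian F src tgt L u w"
  unfolding laplacian_def by (simp add: sum_distrib_left distrib_left right_diff_distrib[symmetric])

lemma laplacian_cong_shift:
  assumes "resistor_network V F src tgt L" "w \<in> V" "\<And>x. x \<in> V \<Longrightarrow> u x = v x + c"
  shows "laplacian F src tgt L u w = laplacian F src tgt L v w"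
  using assms unfolding laplacian_def resistor_network_def
  by (intro arg_cong2[where f="(+)"] sum.cong) auto

lemma sum_incident_edges:
  fixes V :: "'v set" and F :: "'e set" and h k :: "'v \<Rightarrow> 'e \<Rightarrow> 'a::comm_monoid_add"
  assumes "resistor_network V F src tgt L"
  shows "(\<Sum>w\<in>V. (\<Sum>e\<in>{e\<in>F. src e = w}. h w e) + (\<Sum>e\<in>{e\<in>F. tgt e = w}. k w e))
       = (\<Sum>e\<in>F. h (src e) e + k (tgt e) e)"
proof -
  have fin: "finite F" "finite V" and "src ` F \<subseteq> V" "tgt ` F \<subseteq> V"
    using assms unfolding resistor_network_def by auto
  have group: "(\<Sum>w\<in>V. \<Sum>e\<in>{e\<in>F. f e = w}. g w e) = (\<Sum>e\<in>F. g (f e) e)"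
    if "f ` F \<subseteq> V" for f :: "'e \<Rightarrow> 'v" and g :: "'v \<Rightarrow> 'e \<Rightarrow> 'a"
    by (subst sum.group[OF fin that, symmetric]) (auto intro: sum.cong)
  show ?thesis
    by (simp add: sum.distrib group[OF \<open>src ` F \<subseteq> V\<close>] group[OF \<open>tgt ` F \<subseteq> V\<close>])
qed

lemma sum_mult_laplacian:
  assumes "resistor_network V F src tgt L"
  shows "(\<Sum>w\<in>V. f w * laplacian F src tgt L u w)
       = (\<Sum>e\<in>F. (f (src e) - f (tgt e)) * (u (src e) - u (tgt e)) / L e)"
proof -
  have "(\<Sum>w\<in>V. f w * laplacian F src tgt L u w) =
     (\<Sum>e\<in>F. f (src e) * (u (src e) - u (tgt e)) / L e + f (tgt e) * (u (tgt e) - u (src e)) / L e)"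
    unfolding laplacian_def distrib_left sum_distrib_left times_divide_eq_right
    by (rule sum_incident_edges[OF assms])
  also have "\<dots> = (\<Sum>e\<in>F. (f (src e) - f (tgt e)) * (u (src e) - u (tgt e)) / L e)"
    by (intro sum.cong refl) (simp add: add_divide_distrib[symmetric] algebra_simps)
  finally show ?thesis .
qed

lemma sum_laplacian_eq_0:
  "resistor_network V F src tgt L \<Longrightarrow> (\<Sum>w\<in>V. laplacian F src tgt L u w) = 0"
  using sum_mult_laplacian[of V F src tgt L "\<lambda>_. 1" u] by simp

lemma sum_mult_dipole:
  fixes f :: "'v \<Rightarrow> real"
  assumes "finite V" "a \<in> V" "b \<in> V"
  shows "(\<Sum>w\<in>V. f w * (c * ((if w = a then 1 else 0) - (if w = b then 1 else 0))))
    = c * (f a - f b)"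
  using assms
  by (simp add: right_diff_distrib sum_subtractf if_distrib[of "\<lambda>x. f _ * (c * x)"] cong: if_cong)

lemma sum_mult_delta_minus_const:
  fixes f :: "'v \<Rightarrow> real"
  assumes "finite V" "x \<in> V"
  shows "(\<Sum>w\<in>V. f w * ((if w = x then 1 else 0) - c)) = f x - (\<Sum>w\<in>V. f w) * c"
  using assms
  by (simp add: right_diff_distrib sum_subtractf sum_distrib_right if_distrib[of "\<lambda>x. f _ * x"]
      cong: if_cong)

lemma adj_rel_rtrancl_edge_constant:
  assumes "\<forall>e\<in>F. u (src e) = u (tgt e)" "(x, y) \<in> (adj_rel F src tgt)\<^sup>*"
  shows "u x = u y"
  using assms(2) by induction (use assms(1) in \<open>auto simp: adj_rel_def\<close>)

lemma adj_rel_rtrancl_sym: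
  "(x, y) \<in> (adj_rel F src tgt)\<^sup>* \<Longrightarrow> (y, x) \<in> (adj_rel F src tgt)\<^sup>*"
proof (induction rule: rtrancl_induct)
  case (step y z)
  then have "(z, y) \<in> adj_rel F src tgt" unfolding adj_rel_def by auto
  then show ?case using step by (meson converse_rtrancl_into_rtrancl)
qed simp

lemma energy_eq_0_imp_edge_constant:
  assumes "resistor_network V F src tgt L"
    and "(\<Sum>e\<in>F. (u (src e) - u (tgt e))\<^sup>2 / L e) = 0"
  shows "\<forall>e\<in>F. u (src e) = u (tgt e)"
proof -
  have "finite F" and pos: "\<forall>e\<in>F. L e > 0"
    using assms(1) unfolding resistor_network_def by auto
  then have "\<forall>e\<in>F. (u (src e) - u (tgt e))\<^sup>2 / L e = 0"
    using assms(2) by (subst (asm) sum_nonneg_eq_0_iff) auto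
  then show ?thesis using pos by force
qed

lemma harmonic_imp_const:
  assumes N: "resistor_network V F src tgt L" and "graph_connected V F src tgt"
    and "\<forall>w\<in>V. laplacian F src tgt L u w = 0" and "x \<in> V" "y \<in> V"
  shows "u x = u y"
proof -
  have "(\<Sum>e\<in>F. (u (src e) - u (tgt e))\<^sup>2 / L e) = 0"
    using sum_mult_laplacian[OF N, of u u] assms(3) by (simp add: power2_eq_square)
  moreover have "(x, y) \<in> (adj_rel F src tgt)\<^sup>*"
    using assms(2,4,5) unfolding graph_connected_def by blast
  ultimately show ?thesis
    by (rule adj_rel_rtrancl_edge_constant[OF energy_eq_0_imp_edge_constant[OF N]])
qed

section \<open>Existence and uniqueness of potentials\<close>

lemma linear_inj_imp_surj_finite_support:
  fixes T :: "('v \<Rightarrow> real) \<Rightarrow> ('v \<Rightarrow> real)" and S :: "'v set"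
  assumes "finite S"
    and add: "\<And>u w. T (u + w) = T u + T w"
    and cmult: "\<And>c u. T (\<lambda>x. c * u x) = (\<lambda>x. c * T u x)"
    and into: "\<And>u x. x \<notin> S \<Longrightarrow> T u x = 0"
    and inj: "\<And>u. (\<forall>x. x \<notin> S \<longrightarrow> u x = 0) \<Longrightarrow> T u = 0 \<Longrightarrow> u = 0"
    and f: "\<forall>x. x \<notin> S \<longrightarrow> f x = 0"
  shows "\<exists>u. (\<forall>x. x \<notin> S \<longrightarrow> u x = 0) \<and> T u = f"
proof -
  define scale :: "real \<Rightarrow> ('v \<Rightarrow> real) \<Rightarrow> ('v \<Rightarrow> real)"
    where "scale = (\<lambda>c u x. c * u x)"
  interpret vs: vector_space scale
    by unfold_locales (auto simp: scale_def fun_eq_iff algebra_simps)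
  interpret lT: Vector_Spaces.linear scale scale T
    by unfold_locales (simp_all add: add cmult scale_def)
  define W :: "('v \<Rightarrow> real) set" where "W = {u. \<forall>x. x \<notin> S \<longrightarrow> u x = 0}"
  define \<delta> :: "'v \<Rightarrow> 'v \<Rightarrow> real" where "\<delta> = (\<lambda>y x. if x = y then 1 else 0)"
  have "vs.subspace W"
    by (rule vs.subspaceI) (auto simp: W_def scale_def)
  have W_span: "W \<subseteq> vs.span (\<delta> ` S)"
  proof
    fix u assume u: "u \<in> W"
    have "u = (\<Sum>y\<in>S. scale (u y) (\<delta> y))"
    proof
      fix x
      have "(\<Sum>y\<in>S. scale (u y) (\<delta> y)) x = (\<Sum>y\<in>S. u y * \<delta> y x)"
        by (induct S rule: infinite_finite_induct) (auto simp: scale_def)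
      also have "\<dots> = u x"
        using u \<open>finite S\<close> unfolding W_def \<delta>_def
        by (cases "x \<in> S") (auto simp: if_distrib cong: if_cong)
      finally show "u x = (\<Sum>y\<in>S. scale (u y) (\<delta> y)) x" ..
    qed
    also have "\<dots> \<in> vs.span (\<delta> ` S)"
      by (intro vs.span_sum vs.span_scale vs.span_base) auto
    finally show "u \<in> vs.span (\<delta> ` S)" .
  qed
  obtain B where B: "B \<subseteq> W" "vs.independent B" "W \<subseteq> vs.span B"
    by (rule vs.maximal_independent_subset)
  have "finite B"
    using vs.independent_span_bound[of "\<delta> ` S" B] B W_span \<open>finite S\<close> by auto
  have span_B: "vs.span B \<subseteq> W"
    using vs.span_minimal[OF B(1) \<open>vs.subspace W\<close>] .
  have inj_T: "inj_on T (vs.span B)"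
  proof (rule inj_onI)
    fix u w assume "u \<in> vs.span B" "w \<in> vs.span B" "T u = T w"
    then have "u \<in> W" "w \<in> W" and "T (u - w) = 0"
      using span_B lT.diff by auto
    then have "\<forall>x. x \<notin> S \<longrightarrow> (u - w) x = 0" and "T (u - w) = 0"
      unfolding W_def by auto
    then have "u - w = 0" by (rule inj)
    then show "u = w" by simp
  qed
  have "vs.independent (T ` B)"
    using lT.independent_injective_image[OF B(2) inj_T] .
  have "card (T ` B) = card B"
    using card_image[OF inj_on_subset[OF inj_T vs.span_superset]] .
  have "f \<in> vs.span (T ` B)"
  proof (rule ccontr)
    assume f_notin: "f \<notin> vs.span (T ` B)"
    then have "vs.independent (insert f (T ` B))"
      using vs.independent_insertI \<open>vs.independent (T ` B)\<close> by blast
    moreover have "T ` B \<subseteq> W" and "f \<in> W"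
      using into f unfolding W_def by auto
    then have "insert f (T ` B) \<subseteq> vs.span B"
      using B(3) by blast
    ultimately have "card (insert f (T ` B)) \<le> card B"
      using vs.independent_span_bound[OF \<open>finite B\<close>] by blast
    moreover have "f \<notin> T ` B" using f_notin vs.span_base by blast
    ultimately show False using \<open>card (T ` B) = card B\<close> \<open>finite B\<close> by simp
  qed
  then obtain u where "u \<in> vs.span B" "T u = f"
    using lT.span_image by auto
  then show ?thesis using span_B unfolding W_def by auto
qed

lemma laplacian_eq_minus_sum_others:
  assumes "resistor_network V F src tgt L" "z \<in> V"
  shows "laplacian F src tgt L u z = - (\<Sum>w\<in>V-{z}. laplacian F src tgt L u w)"
  using sum.remove[of V z "laplacian F src tgt L u"] sum_laplacian_eq_0[OF assms(1)] assms
  unfolding resistor_network_def by simp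

text \<open>The Laplacian maps the functions on V grounded at z onto the functions on V of total
  sum 0: since its kernel consists of the constants, the map that replaces the (redundant)
  equation at z by the value at z is injective, hence surjective.\<close>

lemma laplacian_solvable:
  assumes N: "resistor_network V F src tgt L" and C: "graph_connected V F src tgt"
    and z: "z \<in> V" and sum_f: "(\<Sum>w\<in>V. f w) = 0"
  shows "\<exists>u. u z = 0 \<and> (\<forall>w. w \<notin> V \<longrightarrow> u w = 0) \<and>
    (\<forall>w\<in>V. laplacian F src tgt L u w = f w)"
proof -
  define T where
    "T = (\<lambda>u w. if w \<in> V then if w = z then u z else laplacian F src tgt L u w else 0)"
  define f' where "f' = (\<lambda>w. if w \<in> V \<and> w \<noteq> z then f w else 0)"
  have "\<exists>u. (\<forall>x. x \<notin> V \<longrightarrow> u x = 0) \<and> T u = f'"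
  proof (rule linear_inj_imp_surj_finite_support)
    show "finite V" using N unfolding resistor_network_def by simp
    show "T (u + w) = T u + T w" for u w
      using laplacian_add[of F src tgt L u w] unfolding T_def
      by (auto simp: fun_eq_iff plus_fun_def)
    show "T (\<lambda>x. c * u x) = (\<lambda>x. c * T u x)" for c u
      using laplacian_cmult[of F src tgt L c u] unfolding T_def by (auto simp: fun_eq_iff)
    show "u = 0" if "\<forall>x. x \<notin> V \<longrightarrow> u x = 0" and "T u = 0" for u
    proof -
      have T0: "T u w = 0" for w using \<open>T u = 0\<close> by simp
      have "u z = 0" using T0[of z] z unfolding T_def by simp
      have "laplacian F src tgt L u w = 0" if "w \<in> V - {z}" for w
        using T0[of w] that unfolding T_def by simp
      then have "\<forall>w\<in>V. laplacian F src tgt L u w = 0"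
        using laplacian_eq_minus_sum_others[OF N z, of u] by auto
      then have "\<forall>x\<in>V. u x = u z" using harmonic_imp_const[OF N C] z by blast
      then show "u = 0" using \<open>u z = 0\<close> that(1) by (auto simp: fun_eq_iff)
    qed
  qed (auto simp: T_def f'_def)
  then obtain u where u: "\<forall>x. x \<notin> V \<longrightarrow> u x = 0" "T u = f'" by blast
  have "u z = 0" using fun_cong[OF u(2), of z] z unfolding T_def f'_def by simp
  have lap: "\<forall>w\<in>V-{z}. laplacian F src tgt L u w = f w"
  proof
    fix w assume "w \<in> V - {z}"
    then show "laplacian F src tgt L u w = f w"
      using fun_cong[OF u(2), of w] unfolding T_def f'_def by simp
  qed
  moreover have "laplacian F src tgt L u z = f z"
    using laplacian_eq_minus_sum_others[OF N z, of u] sum.remove[of V z f] sum_f lap z N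
    unfolding resistor_network_def by simp
  ultimately show ?thesis using u(1) \<open>u z = 0\<close> by blast
qed

lemma potential_unique:
  assumes N: "resistor_network V F src tgt L" and C: "graph_connected V F src tgt" and "z \<in> V"
    and u: "is_potential V F src tgt L y z u" and v: "is_potential V F src tgt L y z v"
  shows "u = v"
proof
  fix x
  have "\<forall>w\<in>V. laplacian F src tgt L (\<lambda>x. u x - v x) w = 0"
    using u v unfolding is_potential_iff_laplacian by (simp add: laplacian_diff)
  then have "x \<in> V \<Longrightarrow> u x - v x = u z - v z"
    using harmonic_imp_const[OF N C] \<open>z \<in> V\<close> by blast
  then show "u x = v x"
    using u v unfolding is_potential_iff_laplacian by (cases "x \<in> V") auto
qed

lemma jvolt_eqI:
  assumes "resistor_network V F src tgt L" "graph_connected V F src tgt" "z \<in> V"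
    and "is_potential V F src tgt L y z u"
  shows "jvolt V F src tgt L z x y = u x"
proof -
  have "(THE u. is_potential V F src tgt L y z u) = u"
    by (rule the_equality[where P = "is_potential V F src tgt L y z", OF assms(4)],
        rule potential_unique[OF assms(1-3) _ assms(4)])
  then show ?thesis unfolding jvolt_def by simp
qed

section \<open>Deleting an edge\<close>

lemma laplacian_remove_edge:
  assumes "i \<in> F" "finite F"
  shows "laplacian F src tgt L u w = laplacian (F - {i}) src tgt L u w
     + ((if w = src i then 1 else 0) - (if w = tgt i then 1 else 0)) * (u (src i) - u (tgt i)) / L i"
proof -
  have split: "(\<Sum>e\<in>{e\<in>F. f e = w}. h e)
      = (\<Sum>e\<in>{e\<in>F - {i}. f e = w}. h e) + (if w = f i then h i else 0)"
    for f :: "'a \<Rightarrow> 'b" and h :: "'a \<Rightarrow> real"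
  proof -
    have "{e\<in>F. f e = w}
        = (if w = f i then insert i {e\<in>F - {i}. f e = w} else {e\<in>F - {i}. f e = w})"
      using assms(1) by auto
    then show ?thesis using assms(2) by simp
  qed
  show ?thesis unfolding laplacian_def split by (simp add: diff_divide_distrib algebra_simps)
qed

lemma adj_rel_rtrancl_remove_edge:
  assumes "i \<in> F" "(src i, x) \<in> (adj_rel F src tgt)\<^sup>*"
  shows "(src i, x) \<in> (adj_rel (F - {i}) src tgt)\<^sup>* \<or>
    (tgt i, x) \<in> (adj_rel (F - {i}) src tgt)\<^sup>*"
  using assms(2)
proof induction
  case (step y z)
  then obtain e where "e \<in> F" "(y = src e \<and> z = tgt e) \<or> (y = tgt e \<and> z = src e)"
    unfolding adj_rel_def by auto
  then have "e = i \<and> z \<in> {src i, tgt i} \<or> (y, z) \<in> adj_rel (F - {i}) src tgt"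
    unfolding adj_rel_def by auto
  then show ?case using step.IH by (auto intro: rtrancl_into_rtrancl)
qed simp

locale electric_network =
  fixes V :: "'v set" and E :: "'e set" and src tgt :: "'e \<Rightarrow> 'v" and L :: "'e \<Rightarrow> real"
  assumes metrized: "metrized_graph V E src tgt L"
begin

lemma network: "resistor_network V E src tgt L"
  using metrized by (rule metrized_graph_imp_resistor_network)

lemma connected: "graph_connected V E src tgt"
  using metrized unfolding metrized_graph_def by simp

lemma finite_vertices: "finite V" and finite_edges: "finite E"
  using network unfolding resistor_network_def by simp_all

lemma card_vertices_pos: "real (card V) > 0"
  using metrized unfolding metrized_graph_def by (simp add: card_gt_0_iff)

lemma src_in_vertices: "i \<in> E \<Longrightarrow> src i \<in> V"
  and tgt_in_vertices: "i \<in> E \<Longrightarrow> tgt i \<in> V"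
  and length_pos: "i \<in> E \<Longrightarrow> L i > 0"
  using network unfolding resistor_network_def by auto

lemma bridge_imp_not_rtrancl_remove_edge:
  assumes i: "i \<in> E" and "is_bridge V E src tgt i"
  shows "(src i, tgt i) \<notin> (adj_rel (E - {i}) src tgt)\<^sup>*"
proof
  let ?R = "adj_rel (E - {i}) src tgt"
  assume src_tgt: "(src i, tgt i) \<in> ?R\<^sup>*"
  have from_src: "(src i, x) \<in> ?R\<^sup>*" if "x \<in> V" for x
    using adj_rel_rtrancl_remove_edge[OF i, of src x tgt] connected src_in_vertices[OF i] that
      rtrancl_trans[OF src_tgt]
    unfolding graph_connected_def by blast
  have "graph_connected V (E - {i}) src tgt"
    unfolding graph_connected_def
    using adj_rel_rtrancl_sym[OF from_src] from_src by (blast intro: rtrancl_trans)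
  then show False using assms(2) unfolding is_bridge_def by blast
qed

context
  fixes i :: 'e and \<phi> :: "'v \<Rightarrow> real"
  assumes edge: "i \<in> E" and potential: "is_potential V E src tgt L (src i) (tgt i) \<phi>"
begin

lemma potential_tgt: "\<phi> (tgt i) = 0"
  using potential unfolding is_potential_def by simp

lemma laplacian_remove_edge_potential:
  assumes "w \<in> V"
  shows "laplacian (E - {i}) src tgt L \<phi> w
    = (1 - \<phi> (src i) / L i) * ((if w = src i then 1 else 0) - (if w = tgt i then 1 else 0))"
proof -
  define d :: real where "d = (if w = src i then 1 else 0) - (if w = tgt i then 1 else 0)"
  have "laplacian E src tgt L \<phi> w = d"
    using potential assms unfolding is_potential_iff_laplacian d_def by blast
  then show ?thesis
    using laplacian_remove_edge[OF edge finite_edges, of src tgt L \<phi> w] potential_tgt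
    unfolding d_def[symmetric] by (simp add: algebra_simps)
qed

lemma bridge_potential_src:
  assumes "is_bridge V E src tgt i"
  shows "\<phi> (src i) = L i"
proof -
  let ?R = "adj_rel (E - {i}) src tgt"
  define \<chi> :: "'v \<Rightarrow> real" where "\<chi> x = (if (src i, x) \<in> ?R\<^sup>* then 1 else 0)" for x
  have "\<forall>e\<in>E - {i}. \<chi> (src e) = \<chi> (tgt e)"
  proof
    fix e assume "e \<in> E - {i}"
    then have "(src e, tgt e) \<in> ?R" "(tgt e, src e) \<in> ?R"
      unfolding adj_rel_def by auto
    then show "\<chi> (src e) = \<chi> (tgt e)"
      unfolding \<chi>_def by (metis rtrancl_into_rtrancl)
  qed
  then have "(\<Sum>w\<in>V. \<chi> w * laplacian (E - {i}) src tgt L \<phi> w) = 0"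
    using sum_mult_laplacian[OF resistor_network_remove_edge[OF network]] by simp
  moreover have "(\<Sum>w\<in>V. \<chi> w * laplacian (E - {i}) src tgt L \<phi> w)
      = (1 - \<phi> (src i) / L i) * (\<chi> (src i) - \<chi> (tgt i))"
    using laplacian_remove_edge_potential
    by (simp add: sum_mult_dipole finite_vertices src_in_vertices[OF edge] tgt_in_vertices[OF edge])
  moreover have "\<chi> (src i) = 1" "\<chi> (tgt i) = 0"
    using bridge_imp_not_rtrancl_remove_edge[OF edge assms] unfolding \<chi>_def by auto
  ultimately show ?thesis using length_pos[OF edge] by simp
qed

lemma bridge_potential_edge_constant:
  assumes "is_bridge V E src tgt i"
  shows "\<forall>e\<in>E - {i}. \<phi> (src e) = \<phi> (tgt e)"
proof (rule energy_eq_0_imp_edge_constant[OF resistor_network_remove_edge[OF network]])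
  have "(\<Sum>e\<in>E - {i}. (\<phi> (src e) - \<phi> (tgt e))\<^sup>2 / L e)
      = (\<Sum>w\<in>V. \<phi> w * laplacian (E - {i}) src tgt L \<phi> w)"
    by (simp add: sum_mult_laplacian[OF resistor_network_remove_edge[OF network]] power2_eq_square)
  also have "\<dots> = 0"
    using laplacian_remove_edge_potential bridge_potential_src[OF assms]
    by (simp add: length_pos[OF edge] less_imp_neq[symmetric])
  finally show "(\<Sum>e\<in>E - {i}. (\<phi> (src e) - \<phi> (tgt e))\<^sup>2 / L e) = 0" .
qed

lemma nonbridge_potential_src:
  assumes "\<not> is_bridge V E src tgt i"
  shows "\<phi> (src i) \<noteq> L i"
proof
  assume "\<phi> (src i) = L i"
  then have "\<forall>w\<in>V. laplacian (E - {i}) src tgt L \<phi> w = 0"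
    using laplacian_remove_edge_potential length_pos[OF edge] by simp
  then have "\<phi> (src i) = \<phi> (tgt i)"
    using harmonic_imp_const[OF resistor_network_remove_edge[OF network]] assms
      src_in_vertices[OF edge] tgt_in_vertices[OF edge] unfolding is_bridge_def by blast
  then show False using \<open>\<phi> (src i) = L i\<close> potential_tgt length_pos[OF edge] by simp
qed

text \<open>Off a bridge, rescaling phi by L_i / (L_i - phi(p_i)) restores a unit current after
  deleting e_i, which yields R_i, R_{a_i,p} and R_{b_i,p} in terms of phi.\<close>

lemma nonbridge_resistances:
  assumes "\<not> is_bridge V E src tgt i"
  shows "R_edge V E src tgt L i = L i * \<phi> (src i) / (L i - \<phi> (src i))"
    and "p \<in> V \<Longrightarrow> Ra V E src tgt L i p = L i * (\<phi> (src i) - \<phi> p) / (L i - \<phi> (src i))"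
    and "Rb V E src tgt L i p = L i * \<phi> p / (L i - \<phi> (src i))"
proof -
  define c where "c = L i / (L i - \<phi> (src i))"
  have c: "c * (1 - \<phi> (src i) / L i) = 1"
    using nonbridge_potential_src[OF assms(1)] length_pos[OF edge] unfolding c_def
    by (simp add: field_simps)
  have N: "resistor_network V (E - {i}) src tgt L"
    using resistor_network_remove_edge[OF network] .
  have C: "graph_connected V (E - {i}) src tgt"
    using assms(1) unfolding is_bridge_def by simp
  have \<phi>_out: "\<forall>w. w \<notin> V \<longrightarrow> \<phi> w = 0"
    using potential unfolding is_potential_def by simp
  have forward: "is_potential V (E - {i}) src tgt L (src i) (tgt i) (\<lambda>x. c * \<phi> x)"
    unfolding is_potential_iff_laplacian laplacian_cmult
    using potential_tgt \<phi>_out laplacian_remove_edge_potential c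
    by (simp add: mult.assoc[symmetric])
  have backward: "is_potential V (E - {i}) src tgt L (tgt i) (src i)
      (\<lambda>x. if x \<in> V then c * (\<phi> (src i) - \<phi> x) else 0)"
    unfolding is_potential_iff_laplacian
  proof (intro conjI allI impI ballI)
    fix w assume "w \<in> V"
    then have "laplacian (E - {i}) src tgt L (\<lambda>x. if x \<in> V then c * (\<phi> (src i) - \<phi> x) else 0) w
        = laplacian (E - {i}) src tgt L (\<lambda>x. - c * \<phi> x) w"
      by (intro laplacian_cong_shift[OF N, where c = "c * \<phi> (src i)"])
        (simp_all add: algebra_simps)
    also have "\<dots> = - (c * (1 - \<phi> (src i) / L i))
        * ((if w = src i then 1 else 0) - (if w = tgt i then 1 else 0))"
      unfolding laplacian_cmult laplacian_remove_edge_potential[OF \<open>w \<in> V\<close>] by simp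
    also have "\<dots> = (if w = tgt i then 1 else 0) - (if w = src i then 1 else 0)"
      unfolding c by simp
    finally show "laplacian (E - {i}) src tgt L (\<lambda>x. if x \<in> V then c * (\<phi> (src i) - \<phi> x) else 0) w
        = (if w = tgt i then 1 else 0) - (if w = src i then 1 else 0)" .
  qed (simp_all add: src_in_vertices[OF edge])
  have src_tgt: "src i \<in> V" "tgt i \<in> V"
    using edge by (simp_all add: src_in_vertices tgt_in_vertices)
  show "R_edge V E src tgt L i = L i * \<phi> (src i) / (L i - \<phi> (src i))"
    unfolding R_edge_def eff_res_def jvolt_eqI[OF N C src_tgt(2) forward] c_def by simp
  show "Ra V E src tgt L i p = L i * (\<phi> (src i) - \<phi> p) / (L i - \<phi> (src i))"
    if "p \<in> V" unfolding Ra_def jvolt_eqI[OF N C src_tgt(1) backward] c_def using that by simp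
  show "Rb V E src tgt L i p = L i * \<phi> p / (L i - \<phi> (src i))"
    unfolding Rb_def jvolt_eqI[OF N C src_tgt(2) forward] c_def by simp
qed

lemma factor2_eq_potential: "factor2 V E src tgt L i = \<phi> (src i) / L i"
proof (cases "is_bridge V E src tgt i")
  case True
  have "((\<lambda>t. t / (L i + t)) \<longlongrightarrow> 1) at_top"
    using length_pos[OF edge] by real_asymp
  then show ?thesis
    using True bridge_potential_src length_pos[OF edge] unfolding factor2_def
    by (simp add: tendsto_Lim)
next
  case False
  have "L i - \<phi> (src i) \<noteq> 0"
    using nonbridge_potential_src[OF False] by simp
  then show ?thesis
    using False length_pos[OF edge]
    unfolding factor2_def nonbridge_resistances(1)[OF False] by (simp add: field_simps)
qed

lemma term1_eq_potential:
  assumes "p \<in> V"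
  shows "term1 V E src tgt L p i = (\<phi> (src i) - 2 * \<phi> p)\<^sup>2 / L i"
proof (cases "is_bridge V E src tgt i")
  case True
  have "((\<lambda>t. L i * t\<^sup>2 / (L i + t)\<^sup>2) \<longlongrightarrow> L i) at_top"
    using length_pos[OF edge] by real_asymp
  moreover have "(Ra_br E src tgt i p t - Rb_br E src tgt i p t)\<^sup>2 = t\<^sup>2" for t
    unfolding Ra_br_def Rb_br_def by simp
  ultimately have "term1 V E src tgt L p i = L i"
    using True unfolding term1_def by (simp add: tendsto_Lim)
  moreover have "\<phi> p = \<phi> (src i) \<or> \<phi> p = \<phi> (tgt i)"
    using adj_rel_rtrancl_remove_edge[OF edge, of src p tgt] connected assms
      src_in_vertices[OF edge] adj_rel_rtrancl_edge_constant[where u = \<phi>, OF bridge_potential_edge_constant[OF True]]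
    unfolding graph_connected_def by metis
  ultimately show ?thesis
    using bridge_potential_src[OF True] potential_tgt length_pos[OF edge]
    by (auto simp: power2_eq_square)
next
  case False
  have "L i - \<phi> (src i) \<noteq> 0"
    using nonbridge_potential_src[OF False] by simp
  moreover have "L i \<noteq> 0" using length_pos[OF edge] by simp
  ultimately have "L i + R_edge V E src tgt L i = L i * L i / (L i - \<phi> (src i))"
    unfolding nonbridge_resistances(1)[OF False] by (simp add: field_simps)
  moreover have "Ra V E src tgt L i p - Rb V E src tgt L i p
      = L i * (\<phi> (src i) - 2 * \<phi> p) / (L i - \<phi> (src i))"
    unfolding nonbridge_resistances(2)[OF False assms] nonbridge_resistances(3)[OF False]
    by (simp add: algebra_simps flip: diff_divide_distrib)
  moreover have "L i * (L i * x / d)\<^sup>2 / (L i * L i / d)\<^sup>2 = x\<^sup>2 / L i" if "d \<noteq> 0" for x d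
    using that \<open>L i \<noteq> 0\<close> by (simp add: field_simps power2_eq_square)
  ultimately show ?thesis
    using False \<open>L i - \<phi> (src i) \<noteq> 0\<close> unfolding term1_def by simp
qed

end

section \<open>The normalized Green's function\<close>

definition is_green :: "'v \<Rightarrow> ('v \<Rightarrow> real) \<Rightarrow> bool" where
  "is_green y g \<longleftrightarrow>
     (\<forall>w\<in>V. laplacian E src tgt L g w = (if w = y then 1 else 0) - 1 / real (card V)) \<and>
     (\<Sum>w\<in>V. g w) = 0"

definition green :: "'v \<Rightarrow> 'v \<Rightarrow> real" where
  "green y = (SOME g. is_green y g)"

lemma is_green_exists:
  assumes "y \<in> V"
  shows "\<exists>g. is_green y g"
proof -
  define f where "f w = (if w = y then 1 else 0) - 1 / real (card V)" for w
  have "(\<Sum>w\<in>V. f w) = 0"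
    unfolding f_def using assms finite_vertices card_vertices_pos by (auto simp: sum_subtractf)
  then obtain u where u: "\<forall>w\<in>V. laplacian E src tgt L u w = f w"
    using laplacian_solvable[OF network connected assms] by blast
  define m where "m = (\<Sum>w\<in>V. u w) / real (card V)"
  have "laplacian E src tgt L (\<lambda>x. u x - m) w = f w" if "w \<in> V" for w
    using laplacian_cong_shift[OF network that, of "\<lambda>x. u x - m" u "- m"] u that by simp
  moreover have "(\<Sum>w\<in>V. u w - m) = 0"
    using card_vertices_pos unfolding m_def by (simp add: sum_subtractf)
  ultimately have "is_green y (\<lambda>x. u x - m)"
    unfolding is_green_def f_def by blast
  then show ?thesis by blast
qed

lemma is_green_green: "y \<in> V \<Longrightarrow> is_green y (green y)"
  unfolding green_def using is_green_exists by (rule someI_ex)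

lemma laplacian_green:
  "y \<in> V \<Longrightarrow> w \<in> V \<Longrightarrow>
    laplacian E src tgt L (green y) w = (if w = y then 1 else 0) - 1 / real (card V)"
  using is_green_green unfolding is_green_def by blast

lemma sum_green: "y \<in> V \<Longrightarrow> (\<Sum>w\<in>V. green y w) = 0"
  using is_green_green unfolding is_green_def by blast

lemma sum_mult_laplacian_green:
  assumes "x \<in> V"
  shows "(\<Sum>w\<in>V. f w * laplacian E src tgt L (green x) w)
    = f x - (\<Sum>w\<in>V. f w) / real (card V)"
  using sum_mult_delta_minus_const[OF finite_vertices assms, of f "1 / real (card V)"]
  by (simp add: laplacian_green assms)

lemma green_sym:
  assumes "x \<in> V" "y \<in> V"
  shows "green x y = green y x"
  using sum_mult_laplacian_green[OF assms(1), of "green y"]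
    sum_mult_laplacian_green[OF assms(2), of "green x"]
    sum_mult_laplacian[OF network, of "green y" "green x"]
    sum_mult_laplacian[OF network, of "green x" "green y"]
  by (simp add: sum_green assms mult.commute)

lemma green_potential:
  assumes "y \<in> V" "z \<in> V"
  shows "is_potential V E src tgt L y z
    (\<lambda>x. if x \<in> V then green y x - green z x - green y z + green z z else 0)"
  unfolding is_potential_iff_laplacian
proof (intro conjI allI impI ballI)
  fix w assume "w \<in> V"
  then have "laplacian E src tgt L
        (\<lambda>x. if x \<in> V then green y x - green z x - green y z + green z z else 0) w
      = laplacian E src tgt L (\<lambda>x. green y x - green z x) w"
    by (intro laplacian_cong_shift[OF network, where c = "- green y z + green z z"]) simp_all
  also have "\<dots> = (if w = y then 1 else 0) - (if w = z then 1 else 0)"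
    using \<open>w \<in> V\<close> assms by (simp add: laplacian_diff laplacian_green)
  finally show "laplacian E src tgt L
        (\<lambda>x. if x \<in> V then green y x - green z x - green y z + green z z else 0) w
      = (if w = y then 1 else 0) - (if w = z then 1 else 0)" .
qed (use assms in simp_all)

lemma eff_res_green:
  assumes "x \<in> V" "y \<in> V"
  shows "eff_res V E src tgt L x y = green x x - 2 * green x y + green y y"
  unfolding eff_res_def jvolt_eqI[OF network connected assms(2) green_potential[OF assms]]
  using assms green_sym[OF assms] by simp

definition green_trace :: real where
  "green_trace = (\<Sum>x\<in>V. green x x)"

lemma sum_eff_res:
  assumes "x \<in> V"
  shows "(\<Sum>y\<in>V. eff_res V E src tgt L x y) = real (card V) * green x x + green_trace"
  using assms unfolding green_trace_def
  by (simp add: eff_res_green sum.distrib sum_subtractf sum_distrib_left[symmetric] sum_green)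

lemma Kf_eq_green_trace: "Kf V E src tgt L = real (card V) * green_trace"
  unfolding Kf_def
  by (simp add: sum_eff_res sum.distrib green_trace_def sum_distrib_left[symmetric])

lemma factor2_eq_eff_res:
  assumes "i \<in> E"
  shows "factor2 V E src tgt L i = eff_res V E src tgt L (src i) (tgt i) / L i"
proof -
  have "src i \<in> V" "tgt i \<in> V"
    using assms by (simp_all add: src_in_vertices tgt_in_vertices)
  then show ?thesis
    using factor2_eq_potential[OF assms green_potential] eff_res_green green_sym by simp
qed

lemma term1_eq_green:
  assumes "i \<in> E" "p \<in> V"
  shows "term1 V E src tgt L p i
    = (green (src i) (src i) - green (tgt i) (tgt i) - 2 * (green p (src i) - green p (tgt i)))\<^sup>2
      / L i"
proof -
  have "src i \<in> V" "tgt i \<in> V"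
    using assms by (simp_all add: src_in_vertices tgt_in_vertices)
  then show ?thesis
    using term1_eq_potential[OF assms(1) green_potential assms(2)] assms(2) green_sym
    by (simp add: algebra_simps)
qed

lemma sum_eff_res_edges:
  "(\<Sum>i\<in>E. eff_res V E src tgt L (src i) (tgt i) / L i) = real (card V) - 1"
proof -
  have "(\<Sum>i\<in>E. eff_res V E src tgt L (src i) (tgt i) / L i)
      = (\<Sum>i\<in>E. (green (src i) (src i) - green (src i) (tgt i)) / L i
                + (green (tgt i) (tgt i) - green (tgt i) (src i)) / L i)"
    by (intro sum.cong refl)
      (simp add: eff_res_green green_sym src_in_vertices tgt_in_vertices
        add_divide_distrib[symmetric])
  also have "\<dots> = (\<Sum>w\<in>V. laplacian E src tgt L (green w) w)"
    unfolding laplacian_def by (rule sum_incident_edges[OF network, symmetric])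
  also have "\<dots> = (\<Sum>w\<in>V. 1 - 1 / real (card V))"
    by (simp add: laplacian_green)
  also have "\<dots> = real (card V) - 1"
    using card_vertices_pos by (simp add: field_simps)
  finally show ?thesis .
qed

lemma sum_green_edge_sq:
  assumes "p \<in> V"
  shows "(\<Sum>i\<in>E. (green p (src i) - green p (tgt i))\<^sup>2 / L i) = green p p"
  using sum_mult_laplacian[OF network, of "green p" "green p"] sum_mult_laplacian_green[OF assms]
  by (simp add: sum_green assms power2_eq_square)

lemma sum_green_edge_mixed:
  assumes "p \<in> V"
  shows "(\<Sum>i\<in>E. (green (src i) (src i) - green (tgt i) (tgt i))
              * (green p (src i) - green p (tgt i)) / L i)
    = green p p - green_trace / real (card V)"
  using sum_mult_laplacian[OF network, of "\<lambda>w. green w w" "green p"]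
    sum_mult_laplacian_green[OF assms, of "\<lambda>w. green w w"]
  unfolding green_trace_def by simp

lemma sum_green_edge_diag:
  "(\<Sum>i\<in>E. (green (src i) (src i) * (green (src i) (src i) - green (src i) (tgt i))
            + green (tgt i) (tgt i) * (green (tgt i) (tgt i) - green (src i) (tgt i))) / L i)
    = (1 - 1 / real (card V)) * green_trace"
proof -
  have "(\<Sum>i\<in>E. (green (src i) (src i) * (green (src i) (src i) - green (src i) (tgt i))
            + green (tgt i) (tgt i) * (green (tgt i) (tgt i) - green (src i) (tgt i))) / L i)
      = (\<Sum>i\<in>E. green (src i) (src i) * ((green (src i) (src i) - green (src i) (tgt i)) / L i)
                + green (tgt i) (tgt i) * ((green (tgt i) (tgt i) - green (tgt i) (src i)) / L i))"
    by (intro sum.cong refl)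
      (simp add: green_sym src_in_vertices tgt_in_vertices add_divide_distrib)
  also have "\<dots> = (\<Sum>w\<in>V. green w w * laplacian E src tgt L (green w) w)"
    unfolding laplacian_def distrib_left sum_distrib_left
    by (rule sum_incident_edges[OF network, symmetric])
  also have "\<dots> = (1 - 1 / real (card V)) * green_trace"
    unfolding green_trace_def by (simp add: laplacian_green sum_distrib_left mult.commute)
  finally show ?thesis .
qed

end

section \<open>The Kirchhoff index\<close>

lemma edge_term_identity:
  fixes v t l a b c P :: real
  assumes "l \<noteq> 0"
  shows "v * ((a - b - 2 * P)\<^sup>2 / l) + (a - 2 * c + b) / l * (v * a + t + (v * b + t))
    = 2 * v * ((a * (a - c) + b * (b - c)) / l) - 4 * v * ((a - b) * P / l)
      + 4 * v * (P\<^sup>2 / l) + 2 * t * ((a - 2 * c + b) / l)"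
  using assms by (simp add: field_simps power2_eq_square)

context electric_network
begin

lemma edge_summand_eq_green:
  assumes "i \<in> E" "p \<in> V"
  shows "real (card V) * term1 V E src tgt L p i + factor2 V E src tgt L i *
      (\<Sum>w\<in>V. eff_res V E src tgt L (src i) w + eff_res V E src tgt L (tgt i) w)
    = 2 * real (card V) * ((green (src i) (src i) * (green (src i) (src i) - green (src i) (tgt i))
          + green (tgt i) (tgt i) * (green (tgt i) (tgt i) - green (src i) (tgt i))) / L i)
      - 4 * real (card V) * ((green (src i) (src i) - green (tgt i) (tgt i))
          * (green p (src i) - green p (tgt i)) / L i)
      + 4 * real (card V) * ((green p (src i) - green p (tgt i))\<^sup>2 / L i)
      + 2 * green_trace * (eff_res V E src tgt L (src i) (tgt i) / L i)"
proof -
  have V: "src i \<in> V" "tgt i \<in> V"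
    using assms(1) by (simp_all add: src_in_vertices tgt_in_vertices)
  then have "(\<Sum>w\<in>V. eff_res V E src tgt L (src i) w + eff_res V E src tgt L (tgt i) w)
      = real (card V) * green (src i) (src i) + green_trace
        + (real (card V) * green (tgt i) (tgt i) + green_trace)"
    by (simp add: sum.distrib sum_eff_res)
  then show ?thesis
    unfolding term1_eq_green[OF assms] factor2_eq_eff_res[OF assms(1)] eff_res_green[OF V]
    by (simp only:) (rule edge_term_identity, use length_pos[OF assms(1)] in simp)
qed

lemma four_Kf_eq_edge_sum:
  assumes "p \<in> V"
  shows "4 * Kf V E src tgt L =
           real (card V) * (\<Sum>i\<in>E. term1 V E src tgt L p i)
         + (\<Sum>i\<in>E. factor2 V E src tgt L i *
              (\<Sum>w\<in>V. eff_res V E src tgt L (src i) w + eff_res V E src tgt L (tgt i) w))"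
    (is "_ = ?rhs")
proof -
  let ?v = "real (card V)" and ?t = green_trace
  define X D P r where
    "X i = green (src i) (src i) * (green (src i) (src i) - green (src i) (tgt i))
         + green (tgt i) (tgt i) * (green (tgt i) (tgt i) - green (src i) (tgt i))"
    and "D i = green (src i) (src i) - green (tgt i) (tgt i)"
    and "P i = green p (src i) - green p (tgt i)"
    and "r i = eff_res V E src tgt L (src i) (tgt i)" for i
  have "?rhs = (\<Sum>i\<in>E. ?v * term1 V E src tgt L p i + factor2 V E src tgt L i *
        (\<Sum>w\<in>V. eff_res V E src tgt L (src i) w + eff_res V E src tgt L (tgt i) w))"
    by (simp add: sum.distrib sum_distrib_left)
  also have "\<dots> = (\<Sum>i\<in>E. 2 * ?v * (X i / L i) - 4 * ?v * (D i * P i / L i)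
      + 4 * ?v * ((P i)\<^sup>2 / L i) + 2 * ?t * (r i / L i))"
    unfolding X_def D_def P_def r_def by (rule sum.cong[OF refl edge_summand_eq_green[OF _ assms]])
  also have "\<dots> = 2 * ?v * (\<Sum>i\<in>E. X i / L i) - 4 * ?v * (\<Sum>i\<in>E. D i * P i / L i)
      + 4 * ?v * (\<Sum>i\<in>E. (P i)\<^sup>2 / L i) + 2 * ?t * (\<Sum>i\<in>E. r i / L i)"
    by (simp only: sum.distrib sum_subtractf sum_distrib_left)
  also have "\<dots> = 2 * ?v * ((1 - 1 / ?v) * ?t) - 4 * ?v * (green p p - ?t / ?v)
      + 4 * ?v * green p p + 2 * ?t * (?v - 1)"
    unfolding X_def D_def P_def r_def sum_green_edge_diag sum_green_edge_mixed[OF assms]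
      sum_green_edge_sq[OF assms] sum_eff_res_edges ..
  also have "\<dots> = 4 * Kf V E src tgt L"
    using card_vertices_pos by (simp add: Kf_eq_green_trace field_simps)
  finally show ?thesis ..
qed

end

theorem lemma3p4:
  fixes V :: "'v set" and E :: "'e set" and src tgt :: "'e \<Rightarrow> 'v"
    and L :: "'e \<Rightarrow> real" and p :: 'v
  assumes "metrized_graph V E src tgt L"
    and "p \<in> V"
  shows "4 * Kf V E src tgt L =
           real (card V) * (\<Sum>i\<in>E. term1 V E src tgt L p i)
         + (\<Sum>i\<in>E. factor2 V E src tgt L i *
              (\<Sum>w\<in>V. eff_res V E src tgt L (src i) w + eff_res V E src tgt L (tgt i) w))"
proof -
  interpret electric_network V E src tgt L
    using assms(1) by unfold_locales
  show ?thesis using four_Kf_eq_edge_sum[OF assms(2)] .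
qed

end
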